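(* Let $p$ be a prime, $k$ a positive integer with $p\nmid k$, and $\chi_k$ a Dirichlet character modulo $k$. Define $\mathfrak{x}_k(p^n)=\left(\chi_k(p)\right)^n$ for all $n\in\mathbb{Z}$. For $s\in\mathbb{C}$ with $\mathrm{Re}(s)>0$, the twisted Gelfand–Graev–Tate gamma function \[ \Gamma_{\mathfrak{x}}(s)=\int_{\mathbb{Q}_p} e^{2\pi i\xi}\,|\xi|_p^{s-1}\,\mathfrak{x}_k\!\left(|\xi|_p^{-1}\right)d\xi \] is given by \[ \Gamma_{\mathfrak{x}}(s)=\frac{\chi_k(p)-p^{s-1}}{\chi_k(p)\left(1-\chi_k(p)\,p^{-s}\right)}. \]
   Context: $\mathbb{Q}_p$ is the field of $p$-adic numbers with norm $|\cdot|_p$, and $d\xi$ is the additive Haar measure on $\mathbb{Q}_p$ normalized so that $\mathbb{Z}_p=\{|\xi|_p\le1\}$ has measure $1$. For $\xi\in\mathbb{Q}_p$, $e^{2\pi i\xi}$ denotes $\exp(2\pi i\{\xi\}_p)$, where $\{\xi\}_p\in\mathbb{Q}$ is the fractional part of $\xi$ in its $p$-adic expansion (the standard additive character of $\mathbb{Q}_p$). Since $p\nmid k$, $\chi_k(p)$ is a root of unity, so $\mathfrak{x}_k(p^n)$ is defined for negative $n$ as well. The integral is understood as the sum over the shells $\{|\xi|_p=p^n\}$, $n\in\mathbb{Z}$. *)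

theory Defs
  imports "HOL-Probability.Probability"
begin

definition dirichlet_character :: "nat \<Rightarrow> (nat \<Rightarrow> complex) \<Rightarrow> bool" where
  "dirichlet_character k chi \<longleftrightarrow>
     (\<forall>a b. chi (a * b) = chi a * chi b) \<and>
     (\<forall>a. chi (a + k) = chi a) \<and>
     (\<forall>a. chi a \<noteq> 0 \<longleftrightarrow> coprime a k)"

text \<open>The twisted character on powers of p:  frakx p chi n = x_k(p^n) = chi(p)^n, n integer.\<close>
definition frakx :: "nat \<Rightarrow> (nat \<Rightarrow> complex) \<Rightarrow> int \<Rightarrow> complex" where
  "frakx p chi n = (chi p) powi n"

text \<open>Model of the ball p^(-m) Z_p: an element xi is represented by its digit sequence
a :: nat => nat (digits in {0..<p}), xi = sum_j a j * p^(j - m).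
The normalized Haar measure on Z_p is the product of uniform measures on the digits.\<close>
definition Zp_digits :: "nat \<Rightarrow> (nat \<Rightarrow> nat) measure" where
  "Zp_digits p = PiM UNIV (\<lambda>_. measure_pmf (pmf_of_set {0..<p}))"

text \<open>p-adic valuation of xi = sum_j a j p^(j-m) (meaningful when xi is nonzero).\<close>
definition padic_ord :: "int \<Rightarrow> (nat \<Rightarrow> nat) \<Rightarrow> int" where
  "padic_ord m a = int (LEAST j. a j \<noteq> 0) - m"

definition padic_norm :: "nat \<Rightarrow> int \<Rightarrow> (nat \<Rightarrow> nat) \<Rightarrow> real" where
  "padic_norm p m a = (if \<exists>j. a j \<noteq> 0 then real p powi (- padic_ord m a) else 0)"

definition padic_frac :: "nat \<Rightarrow> int \<Rightarrow> (nat \<Rightarrow> nat) \<Rightarrow> real" where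
  "padic_frac p m a = (\<Sum>j < nat m. real (a j) * real p powi (int j - m))"

definition padic_char :: "nat \<Rightarrow> int \<Rightarrow> (nat \<Rightarrow> nat) \<Rightarrow> complex" where
  "padic_char p m a = exp (2 * pi * \<i> * complex_of_real (padic_frac p m a))"

text \<open>Integral over the shell {|xi|_p = p^n} of an integrand F (given as a function of the
representation (m, a) of xi): the shell lies in the ball p^(-n) Z_p, whose Haar measure is
p^n times the pushforward of the normalized measure on Z_p.\<close>
definition shell_integral ::
  "nat \<Rightarrow> int \<Rightarrow> (int \<Rightarrow> (nat \<Rightarrow> nat) \<Rightarrow> complex) \<Rightarrow> complex" where
  "shell_integral p n F =
     complex_of_real (real p powi n) *
     (LINT a|Zp_digits p. indicator {a. padic_norm p n a = real p powi n} a * F n a)"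

text \<open>Integrand e^(2 pi i xi) |xi|_p^(s-1) x_k(|xi|_p^(-1)); note |xi|_p^(-1) = p^(ord xi).\<close>
definition twisted_gamma_integrand ::
  "nat \<Rightarrow> (nat \<Rightarrow> complex) \<Rightarrow> complex \<Rightarrow> int \<Rightarrow> (nat \<Rightarrow> nat) \<Rightarrow> complex" where
  "twisted_gamma_integrand p chi s m a =
     padic_char p m a * complex_of_real (padic_norm p m a) powr (s - 1)
       * frakx p chi (padic_ord m a)"

end

theory Submission
  imports Defs "HOL-Number_Theory.Residues"
begin

text \<open>A point of the shell \<open>|\<xi>|\<^sub>p = p\<^sup>n\<close> is a digit sequence with nonzero leading
  digit, and there the integrand is \<open>(\<chi>(p) p\<^sup>-\<^sup>s)\<^sup>-\<^sup>n\<close> times the additive character,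
  which factors over the digits; so the shell integral is a product of digit averages.
  For \<open>n \<le> 0\<close> only the leading digit matters and the shell contributes
  \<open>(1 - 1/p) (\<chi>(p) p\<^sup>-\<^sup>s)\<^sup>-\<^sup>n\<close>. For \<open>n = 1\<close> the leading digit averages the nontrivial
  \<open>p\<close>-th roots of unity, giving \<open>-p\<^sup>s\<^sup>-\<^sup>1/\<chi>(p)\<close>. For \<open>n \<ge> 2\<close> the digit at position
  \<open>n - 1\<close> runs over all \<open>p\<close>-th roots of unity, so the shell integral vanishes.
  Since \<open>|\<chi>(p)| = 1\<close> and \<open>Re s > 0\<close>, the shells \<open>n \<le> 0\<close> form a convergent geometric
  series, and summing everything gives the closed form.\<close>

lemma integral_PiM_pmf_prod:
  fixes h :: "'i \<Rightarrow> 'a \<Rightarrow> 'b::{real_normed_field,banach,second_countable_topology}"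
  assumes J: "finite J" and P_finite: "finite (set_pmf P)"
  shows "(LINT x|PiM UNIV (\<lambda>_. measure_pmf P). (\<Prod>i\<in>J. h i (x i))) =
         (\<Prod>i\<in>J. measure_pmf.expectation P (h i))"
proof -
  interpret product_prob_space "\<lambda>_. measure_pmf P" UNIV
    by (simp add: product_prob_space_def product_sigma_finite_def product_prob_space_axioms_def
        prob_space_measure_pmf prob_space_imp_sigma_finite)
  have meas: "(\<lambda>y. \<Prod>i\<in>J. h i (y i)) \<in> borel_measurable (PiM J (\<lambda>_. measure_pmf P))"
    by (intro borel_measurable_prod measurable_compose[OF measurable_component_singleton]) auto
  have "(LINT x|PiM UNIV (\<lambda>_. measure_pmf P). (\<Prod>i\<in>J. h i (x i))) =
      (LINT x|PiM UNIV (\<lambda>_. measure_pmf P). (\<Prod>i\<in>J. h i (restrict x J i)))"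
    by (intro Bochner_Integration.integral_cong prod.cong) auto
  also have "\<dots> = (LINT y|PiM J (\<lambda>_. measure_pmf P). (\<Prod>i\<in>J. h i (y i)))"
    using J meas by (subst distr_PiM_restrict_finite[symmetric, of J]) (auto simp: integral_distr)
  also have "\<dots> = (\<Prod>i\<in>J. measure_pmf.expectation P (h i))"
    by (rule product_integral_prod[OF J integrable_measure_pmf_finite[OF P_finite]])
  finally show ?thesis .
qed

lemma integral_Zp_digits_prod:
  fixes h :: "nat \<Rightarrow> nat \<Rightarrow> complex"
  assumes p: "p > 0" and J: "finite J"
  shows "(LINT a|Zp_digits p. (\<Prod>i\<in>J. h i (a i))) = (\<Prod>i\<in>J. (\<Sum>d<p. h i d) / of_nat p)"
proof -
  have nonempty: "{..<p} \<noteq> {}"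
    using p by auto
  have mean: "measure_pmf.expectation (pmf_of_set {..<p}) g = (\<Sum>d<p. g d) / of_nat p"
    for g :: "nat \<Rightarrow> complex"
  proof -
    have "measure_pmf.expectation (pmf_of_set {..<p}) g = (\<Sum>d<p. pmf (pmf_of_set {..<p}) d *\<^sub>R g d)"
      using nonempty by (intro integral_measure_pmf) auto
    also have "\<dots> = (\<Sum>d<p. g d) / of_nat p"
      using nonempty by (simp add: scaleR_conv_of_real sum_divide_distrib)
    finally show ?thesis .
  qed
  have "finite (set_pmf (pmf_of_set {..<p}))"
    using nonempty by auto
  then show ?thesis
    unfolding Zp_digits_def atLeast0LessThan using J by (simp add: integral_PiM_pmf_prod mean)
qed

lemma sum_roots_of_unity_exp:
  assumes "n > 1"
  shows "(\<Sum>k<n. exp (2 * pi * \<i> * complex_of_real (real k / real n))) = 0"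
proof -
  have "(\<Sum>k<n. exp (2 * pi * \<i> * complex_of_real (real k / real n))) =
        (\<Sum>k<n. cis (2 * pi * real k / real n))"
    by (simp add: cis_conv_exp mult_ac)
  also have "\<dots> = (\<Sum>z | z ^ n = 1. z)"
    using assms by (intro sum.reindex_bij_betw Complex.bij_betw_roots_unity) simp
  also have "\<dots> = 0"
    using assms by (rule sum_roots_unity)
  finally show ?thesis .
qed

lemma dirichlet_character_mod:
  assumes "dirichlet_character k chi"
  shows "chi (a mod k) = chi a"
proof -
  have periodic: "chi (r + q * k) = chi r" for r q
  proof (induction q)
    case (Suc q)
    have "chi (r + Suc q * k) = chi ((r + q * k) + k)"
      by (simp add: algebra_simps)
    also have "\<dots> = chi r"
      using assms Suc by (simp add: dirichlet_character_def)
    finally show ?case .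
  qed simp
  show ?thesis
    using periodic[of "a mod k" "a div k"] by simp
qed

lemma dirichlet_character_one:
  assumes "dirichlet_character k chi"
  shows "chi 1 = 1"
proof -
  have "chi 1 = chi 1 * chi 1" and "chi 1 \<noteq> 0"
    using assms unfolding dirichlet_character_def by (metis mult_1, simp)
  then show ?thesis
    by simp
qed

lemma dirichlet_character_power:
  assumes "dirichlet_character k chi"
  shows "chi (a ^ n) = chi a ^ n"
proof (induction n)
  case 0
  show ?case
    using dirichlet_character_one[OF assms] by simp
next
  case (Suc n)
  then show ?case
    using assms by (simp add: dirichlet_character_def)
qed

lemma norm_dirichlet_character:
  assumes chi: "dirichlet_character k chi" and "k > 0" and "coprime a k"
  shows "norm (chi a) = 1"
proof -
  have "[a ^ totient k = 1] (mod k)"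
    using assms(3) by (rule euler_theorem)
  then have "chi (a ^ totient k) = chi 1"
    by (metis chi cong_def dirichlet_character_mod)
  then have "chi a ^ totient k = 1"
    using dirichlet_character_one[OF chi] by (simp add: dirichlet_character_power[OF chi])
  then have "norm (chi a) ^ totient k = 1"
    by (metis norm_one norm_power)
  moreover have "totient k > 0"
    using assms(2) by simp
  ultimately show ?thesis
    using power_eq_imp_eq_base[of "norm (chi a)" "totient k" 1] by simp
qed

lemma of_real_power_int_powr:
  assumes "x > 0"
  shows "complex_of_real (x powi n) powr z = (complex_of_real x powr z) powi n"
proof -
  have "ln (x powi n) = of_int n * ln x"
    using assms by (simp add: ln_realpow power_int_def ln_inverse)
  then have "complex_of_real (x powi n) powr z = exp (of_int n * (z * of_real (ln x)))"
    using assms by (simp add: powr_def Ln_of_real mult_ac del: of_real_power_int)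
  also have "\<dots> = (complex_of_real x powr z) powi n"
    using assms by (simp add: powr_def Ln_of_real exp_power_int)
  finally show ?thesis .
qed

lemma has_sum_geometric:
  fixes z :: "'a::{real_normed_field,banach}"
  assumes "norm z < 1"
  shows "((\<lambda>n. z ^ n) has_sum (1 / (1 - z))) UNIV"
  using assms
  by (intro norm_summable_imp_has_sum geometric_sums) (simp_all add: norm_power summable_geometric)

lemma has_sum_power_int_nonpos:
  fixes z :: "'a::{real_normed_field,banach}"
  assumes "norm z < 1"
  shows "((\<lambda>n::int. z powi (- n)) has_sum (1 / (1 - z))) {..0}"
proof -
  have "bij_betw (\<lambda>m::nat. - int m) UNIV {..0}"
    by (rule bij_betw_byWitness[where f' = "\<lambda>n. nat (- n)"]) auto
  moreover have "((\<lambda>m::nat. z powi (- (- int m))) has_sum (1 / (1 - z))) UNIV"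
    unfolding minus_minus power_int_of_nat by (rule has_sum_geometric[OF assms])
  ultimately show ?thesis
    using has_sum_reindex_bij_betw[of "\<lambda>m::nat. - int m" UNIV "{..0}" "\<lambda>n. z powi (- n)"] by simp
qed

lemma padic_ord_of_leading_digit:
  assumes "a 0 \<noteq> 0"
  shows "padic_ord n a = - n"
  using assms by (simp add: padic_ord_def)

lemma padic_norm_eq_iff_leading_digit:
  assumes "p \<ge> 2"
  shows "padic_norm p n a = real p powi n \<longleftrightarrow> a 0 \<noteq> 0"
proof (cases "a 0 = 0")
  case False
  then show ?thesis
    by (auto simp: padic_norm_def padic_ord_of_leading_digit)
next
  case True
  show ?thesis
  proof (cases "\<exists>j. a j \<noteq> 0")
    case False
    then show ?thesis
      using assms by (simp add: padic_norm_def)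
  next
    case nonzero: True
    define j0 where "j0 = (LEAST j. a j \<noteq> 0)"
    have "a j0 \<noteq> 0"
      unfolding j0_def using nonzero by (rule LeastI_ex)
    then have "n - int j0 < n"
      using True by (cases j0) auto
    then have "real p powi (n - int j0) < real p powi n"
      using assms by (intro power_int_strict_increasing) auto
    moreover have "padic_norm p n a = real p powi (n - int j0)"
      using nonzero by (simp add: padic_norm_def padic_ord_def j0_def)
    ultimately show ?thesis
      using True by simp
  qed
qed

text \<open>On the shell \<open>|\<xi>|\<^sub>p = p\<^sup>n\<close> the integrand factors over the digits \<open>j < max 1 n\<close>:
  the leading digit carries the shell indicator, and each digit \<open>j < n\<close> carries its part of
  the additive character.\<close>
definition shell_digit_factor :: "nat \<Rightarrow> int \<Rightarrow> nat \<Rightarrow> nat \<Rightarrow> complex" where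
  "shell_digit_factor p n j d =
     (if j = 0 \<and> d = 0 then 0
      else if int j < n then exp (2 * pi * \<i> * complex_of_real (real d * real p powi (int j - n)))
      else 1)"

lemma padic_char_eq_prod_shell_digit_factor:
  assumes "a 0 \<noteq> 0"
  shows "padic_char p n a = (\<Prod>j<max 1 (nat n). shell_digit_factor p n j (a j))"
proof (cases "n \<ge> 1")
  case True
  then have "padic_char p n a =
      (\<Prod>j<nat n. exp (2 * pi * \<i> * complex_of_real (real (a j) * real p powi (int j - n))))"
    by (simp add: padic_char_def padic_frac_def sum_distrib_left exp_sum)
  also have "\<dots> = (\<Prod>j<nat n. shell_digit_factor p n j (a j))"
  proof (intro prod.cong refl)
    fix j
    assume "j \<in> {..<nat n}"
    then show "exp (2 * pi * \<i> * complex_of_real (real (a j) * real p powi (int j - n))) =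
        shell_digit_factor p n j (a j)"
      using assms by (cases "j = 0") (auto simp: shell_digit_factor_def)
  qed
  finally show ?thesis
    using True by (simp add: max_absorb2)
next
  case False
  then show ?thesis
    using assms by (simp add: padic_char_def padic_frac_def shell_digit_factor_def lessThan_Suc)
qed

lemma shell_indicator_mult_twisted_gamma_integrand:
  assumes "p \<ge> 2"
  shows "indicator {a. padic_norm p n a = real p powi n} a * twisted_gamma_integrand p chi s n a =
    complex_of_real (real p powi n) powr (s - 1) * chi p powi (- n) *
    (\<Prod>j<max 1 (nat n). shell_digit_factor p n j (a j))"
proof (cases "a 0 = 0")
  case True
  then have "(\<Prod>j<max 1 (nat n). shell_digit_factor p n j (a j)) = 0"
    by (intro prod_zero bexI[of _ 0]) (auto simp: shell_digit_factor_def)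
  then show ?thesis
    using True padic_norm_eq_iff_leading_digit[OF assms] by simp
next
  case False
  then have "padic_norm p n a = real p powi n"
    using padic_norm_eq_iff_leading_digit[OF assms] by simp
  with False show ?thesis
    by (simp add: twisted_gamma_integrand_def frakx_def padic_ord_of_leading_digit
        padic_char_eq_prod_shell_digit_factor)
qed

lemma shell_integral_twisted_gamma_integrand:
  assumes "p \<ge> 2"
  shows "shell_integral p n (twisted_gamma_integrand p chi s) =
    (chi p * of_nat p powr (- s)) powi (- n) *
    (\<Prod>j<max 1 (nat n). (\<Sum>d<p. shell_digit_factor p n j d) / of_nat p)"
proof -
  have "complex_of_real (real p powi n) powr (s - 1) = (of_nat p powr (s - 1)) powi n"
    using assms of_real_power_int_powr[of "real p" n "s - 1"] by simp
  then have "complex_of_real (real p powi n) * complex_of_real (real p powi n) powr (s - 1) =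
        (of_nat p * of_nat p powr (s - 1)) powi n"
    by (simp add: power_int_mult_distrib)
  also have "of_nat p * of_nat p powr (s - 1) = (of_nat p powr s :: complex)"
    using assms powr_add[of "of_nat p :: complex" 1 "s - 1"] by simp
  finally have "complex_of_real (real p powi n) * complex_of_real (real p powi n) powr (s - 1) *
      chi p powi (- n) = (chi p * of_nat p powr (- s)) powi (- n)"
    by (simp add: power_int_mult_distrib powr_minus power_int_minus power_int_inverse)
  moreover have "(LINT a|Zp_digits p. indicator {a. padic_norm p n a = real p powi n} a *
        twisted_gamma_integrand p chi s n a) =
      complex_of_real (real p powi n) powr (s - 1) * chi p powi (- n) *
      (\<Prod>j<max 1 (nat n). (\<Sum>d<p. shell_digit_factor p n j d) / of_nat p)"
    using assms by (simp add: shell_indicator_mult_twisted_gamma_integrand integral_Zp_digits_prod)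
  ultimately show ?thesis
    unfolding shell_integral_def by (simp add: mult_ac)
qed

lemma sum_shell_digit_factor_leading_nonpos:
  assumes "p > 0" and "n \<le> 0"
  shows "(\<Sum>d<p. shell_digit_factor p n 0 d) = of_nat p - 1"
proof -
  obtain q where "p = Suc q"
    using assms(1) gr0_implies_Suc by blast
  then show ?thesis
    using assms(2) by (simp only: sum.lessThan_Suc_shift) (simp add: shell_digit_factor_def)
qed

lemma sum_shell_digit_factor_leading_one:
  assumes "p \<ge> 2"
  shows "(\<Sum>d<p. shell_digit_factor p 1 0 d) = - 1"
proof -
  define e where "e d = exp (2 * pi * \<i> * complex_of_real (real d / real p))" for d
  obtain q where p: "p = Suc q"
    using assms by (cases p) auto
  have "shell_digit_factor p 1 0 d = (if d = 0 then 0 else e d)" for d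
    by (simp add: shell_digit_factor_def e_def power_int_minus divide_inverse)
  then have "(\<Sum>d<p. shell_digit_factor p 1 0 d) = (\<Sum>d<Suc q. if d = 0 then 0 else e d)"
    unfolding p by simp
  also have "\<dots> = (\<Sum>d<Suc q. e d) - e 0"
    by (simp only: sum.lessThan_Suc_shift) simp
  also have "(\<Sum>d<Suc q. e d) = 0"
    unfolding e_def p[symmetric] using assms by (intro sum_roots_of_unity_exp) simp
  finally show ?thesis
    by (simp add: e_def)
qed

lemma sum_shell_digit_factor_last:
  assumes "p \<ge> 2" and "n \<ge> 2"
  shows "(\<Sum>d<p. shell_digit_factor p n (nat n - 1) d) = 0"
proof -
  have "nat n - 1 \<noteq> 0" and "int (nat n - 1) < n" and "int (nat n - 1) - n = - 1"
    using assms(2) by auto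
  then have "shell_digit_factor p n (nat n - 1) d =
      exp (2 * pi * \<i> * complex_of_real (real d / real p))" for d
    by (simp add: shell_digit_factor_def power_int_minus divide_inverse)
  then show ?thesis
    using assms(1) sum_roots_of_unity_exp[of p] by simp
qed

lemma shell_integral_twisted_gamma_integrand_nonpos:
  assumes "p \<ge> 2" and "n \<le> 0"
  shows "shell_integral p n (twisted_gamma_integrand p chi s) =
    (of_nat p - 1) / of_nat p * (chi p * of_nat p powr (- s)) powi (- n)"
  using assms
  by (simp add: shell_integral_twisted_gamma_integrand sum_shell_digit_factor_leading_nonpos
      lessThan_Suc)

lemma shell_integral_twisted_gamma_integrand_one:
  assumes "p \<ge> 2"
  shows "shell_integral p 1 (twisted_gamma_integrand p chi s) = - (of_nat p powr (s - 1)) / chi p"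
proof -
  have "shell_integral p 1 (twisted_gamma_integrand p chi s) =
      inverse (chi p * of_nat p powr (- s)) * (- 1 / of_nat p)"
    using assms by (simp add: shell_integral_twisted_gamma_integrand
        sum_shell_digit_factor_leading_one power_int_minus)
  also have "\<dots> = - (of_nat p powr s / of_nat p) / chi p"
    by (simp add: powr_minus divide_inverse mult_ac)
  also have "of_nat p powr s / of_nat p = (of_nat p powr (s - 1) :: complex)"
    using assms by (simp add: powr_diff)
  finally show ?thesis .
qed

lemma shell_integral_twisted_gamma_integrand_ge2:
  assumes "p \<ge> 2" and "n \<ge> 2"
  shows "shell_integral p n (twisted_gamma_integrand p chi s) = 0"
proof -
  have "(\<Prod>j<max 1 (nat n). (\<Sum>d<p. shell_digit_factor p n j d) / of_nat p) = 0"
    using assms sum_shell_digit_factor_last[OF assms]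
    by (intro prod_zero bexI[of _ "nat n - 1"]) auto
  then show ?thesis
    using assms(1) by (simp add: shell_integral_twisted_gamma_integrand)
qed

lemma has_sum_shell_integral_twisted_gamma_integrand:
  assumes p: "p \<ge> 2" and w: "norm (chi p * of_nat p powr (- s)) < 1"
  shows "((\<lambda>n. shell_integral p n (twisted_gamma_integrand p chi s)) has_sum
    (- (of_nat p powr (s - 1)) / chi p +
     (of_nat p - 1) / of_nat p * (1 / (1 - chi p * of_nat p powr (- s))))) UNIV"
    (is "(?f has_sum (_ + ?S)) UNIV")
proof -
  have "((\<lambda>n. (of_nat p - 1) / of_nat p * (chi p * of_nat p powr (- s)) powi (- n)) has_sum ?S) {..0}"
    by (intro has_sum_cmult_right has_sum_power_int_nonpos w)
  then have "(?f has_sum ?S) {..0}"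
    by (rule has_sum_cong[THEN iffD1, rotated]) (simp add: shell_integral_twisted_gamma_integrand_nonpos p)
  then have "(?f has_sum (?f 1 + ?S)) (insert 1 {..0})"
    by (intro has_sum_insert) auto
  then have "(?f has_sum (?f 1 + ?S)) UNIV"
    by (rule has_sum_cong_neutral[THEN iffD1, rotated -1])
      (auto simp: shell_integral_twisted_gamma_integrand_ge2 p)
  then show ?thesis
    unfolding shell_integral_twisted_gamma_integrand_one[OF p] .
qed

theorem mainTheorem1:
  fixes p k :: nat and chi :: "nat \<Rightarrow> complex" and s :: complex
  assumes "prime p" and "k > 0" and "\<not> p dvd k"
    and "dirichlet_character k chi"
    and "Re s > 0"
  shows "((\<lambda>n::int. shell_integral p n (twisted_gamma_integrand p chi s)) has_sum
           ((chi p - of_nat p powr (s - 1)) / (chi p * (1 - chi p * of_nat p powr (- s)))))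
         UNIV"
proof -
  have p: "p \<ge> 2"
    using assms(1) by (rule prime_ge_2_nat)
  have chi_p: "norm (chi p) = 1"
    using assms by (intro norm_dirichlet_character) (auto simp: prime_imp_coprime)
  have "norm (of_nat p powr (- s)) < 1"
    using p assms(5) by (simp add: norm_powr_real_powr powr_less_one)
  then have w: "norm (chi p * of_nat p powr (- s)) < 1"
    by (simp add: norm_mult chi_p)
  have "chi p \<noteq> 0" and "1 - chi p * of_nat p powr (- s) \<noteq> 0"
    using chi_p w by auto
  moreover have "of_nat p powr (s - 1) * of_nat p powr (- s) = (1 / of_nat p :: complex)"
    by (subst powr_add[symmetric]) (simp add: powr_minus divide_inverse)
  ultimately have closed_form:
    "- (of_nat p powr (s - 1)) / chi p +
       (of_nat p - 1) / of_nat p * (1 / (1 - chi p * of_nat p powr (- s))) =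
     (chi p - of_nat p powr (s - 1)) / (chi p * (1 - chi p * of_nat p powr (- s)))"
    using p by (simp add: field_simps)
  show ?thesis
    using has_sum_shell_integral_twisted_gamma_integrand[where chi = chi, OF p w] unfolding closed_form .
qed

end
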